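(* Let $\mathcal F$ be a proper filter on $\omega$. The games $\mathfrak G_1(\mathcal F)$ and $\mathfrak G(\mathrm{Fr},[\omega]^{<\omega},\mathcal F)$ are equivalent: a player has a winning strategy in one game if and only if the same player has a winning strategy in the other. Consequently, in either game, player I has a winning strategy if and only if $\mathcal F$ is meager, and player II never has a winning strategy.
   Context: A filter on $\omega$ is a family $\mathcal F\subseteq\mathcal P(\omega)$ closed under finite intersections and supersets and containing all cofinite sets; it is proper if all its members are infinite. $\mathcal P(\omega)$ is identified with $2^\omega$ with the product topology; "meager" refers to this topology. $\mathrm{Fr}$ is the family of cofinite subsets of $\omega$. Game $\mathfrak G(\mathcal X,[\omega]^{<\omega},\mathcal Z)$: at each stage $k\in\omega$, player I chooses $X_k\in\mathcal X$ and player II responds with a nonempty finite set $s_k\subseteq X_k$; II wins if $\bigcup_k s_k\in\mathcal Z$, otherwise I wins. Game $\mathfrak G_1(\mathcal F)$: at each stage $k$, player I chooses $m_k\in\omega$ and player II responds with $n_k\in\omega$; II wins if $n_0<n_1<\cdots$, $m_k<n_k$ for infinitely many $k$, and $\{n_k:k\in\omega\}\in\mathcal F$; otherwise I wins. *)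

theory Defs
  imports "HOL-Analysis.Analysis"
begin

definition Fr :: "nat set set" where
  "Fr = {A. finite (- A)}"

definition is_filter :: "nat set set \<Rightarrow> bool" where
  "is_filter F \<longleftrightarrow>
     (\<forall>A\<in>F. \<forall>B\<in>F. A \<inter> B \<in> F) \<and>
     (\<forall>A\<in>F. \<forall>B. A \<subseteq> B \<longrightarrow> B \<in> F) \<and>
     Fr \<subseteq> F"

definition proper_filter :: "nat set set \<Rightarrow> bool" where
  "proper_filter F \<longleftrightarrow> is_filter F \<and> (\<forall>A\<in>F. infinite A)"

text \<open>Cantor space: product topology of discrete two-point spaces, carrier = all
  functions nat => bool.  A subset of P(omega) is identified with the set of its
  characteristic functions.\<close>

definition cantor_top :: "(nat \<Rightarrow> bool) topology" where
  "cantor_top = product_topology (\<lambda>_. discrete_topology (UNIV :: bool set)) UNIV"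

definition nowhere_dense_in :: "'a topology \<Rightarrow> 'a set \<Rightarrow> bool" where
  "nowhere_dense_in T A \<longleftrightarrow> A \<subseteq> topspace T \<and> T interior_of (T closure_of A) = {}"

definition meager_in :: "'a topology \<Rightarrow> 'a set \<Rightarrow> bool" where
  "meager_in T A \<longleftrightarrow> (\<exists>N :: nat \<Rightarrow> 'a set. (\<forall>k. nowhere_dense_in T (N k)) \<and> A \<subseteq> (\<Union>k. N k))"

definition char_set :: "nat set set \<Rightarrow> (nat \<Rightarrow> bool) set" where
  "char_set F = {f. {n. f n} \<in> F}"

definition meager_family :: "nat set set \<Rightarrow> bool" where
  "meager_family F \<longleftrightarrow> meager_in cantor_top (char_set F)"

text \<open>A strategy for player I maps the list of II's previous moves to I's next move;
  a strategy for player II maps the list of I's moves so far (including the current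
  one) to II's response.  (In a game of perfect information this is equivalent to
  strategies depending on the full history.)  A player making an illegal move loses.\<close>

definition G_legal_II :: "nat set \<Rightarrow> nat set \<Rightarrow> bool" where
  "G_legal_II X s \<longleftrightarrow> finite s \<and> s \<noteq> {} \<and> s \<subseteq> X"

definition G_winning_I :: "nat set set \<Rightarrow> nat set set \<Rightarrow> (nat set list \<Rightarrow> nat set) \<Rightarrow> bool" where
  "G_winning_I \<X> \<Z> \<sigma> \<longleftrightarrow>
     (\<forall>s :: nat \<Rightarrow> nat set.
        (\<forall>k. (\<forall>j<k. G_legal_II (\<sigma> (map s [0..<j])) (s j)) \<longrightarrow> \<sigma> (map s [0..<k]) \<in> \<X>) \<and>
        ((\<forall>k. G_legal_II (\<sigma> (map s [0..<k])) (s k)) \<longrightarrow> (\<Union>k. s k) \<notin> \<Z>))"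

definition G_winning_II :: "nat set set \<Rightarrow> nat set set \<Rightarrow> (nat set list \<Rightarrow> nat set) \<Rightarrow> bool" where
  "G_winning_II \<X> \<Z> \<tau> \<longleftrightarrow>
     (\<forall>X :: nat \<Rightarrow> nat set. (\<forall>k. X k \<in> \<X>) \<longrightarrow>
        (\<forall>k. G_legal_II (X k) (\<tau> (map X [0..<Suc k]))) \<and>
        (\<Union>k. \<tau> (map X [0..<Suc k])) \<in> \<Z>)"

definition I_wins_G :: "nat set set \<Rightarrow> nat set set \<Rightarrow> bool" where
  "I_wins_G \<X> \<Z> \<longleftrightarrow> (\<exists>\<sigma>. G_winning_I \<X> \<Z> \<sigma>)"

definition II_wins_G :: "nat set set \<Rightarrow> nat set set \<Rightarrow> bool" where
  "II_wins_G \<X> \<Z> \<longleftrightarrow> (\<exists>\<tau>. G_winning_II \<X> \<Z> \<tau>)"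

definition G1_II_wins_play :: "nat set set \<Rightarrow> (nat \<Rightarrow> nat) \<Rightarrow> (nat \<Rightarrow> nat) \<Rightarrow> bool" where
  "G1_II_wins_play F m n \<longleftrightarrow>
     strict_mono n \<and> (\<exists>\<^sub>\<infinity>k. m k < n k) \<and> range n \<in> F"

definition G1_winning_I :: "nat set set \<Rightarrow> (nat list \<Rightarrow> nat) \<Rightarrow> bool" where
  "G1_winning_I F \<sigma> \<longleftrightarrow>
     (\<forall>n :: nat \<Rightarrow> nat. \<not> G1_II_wins_play F (\<lambda>k. \<sigma> (map n [0..<k])) n)"

definition G1_winning_II :: "nat set set \<Rightarrow> (nat list \<Rightarrow> nat) \<Rightarrow> bool" where
  "G1_winning_II F \<tau> \<longleftrightarrow>
     (\<forall>m :: nat \<Rightarrow> nat. G1_II_wins_play F m (\<lambda>k. \<tau> (map m [0..<Suc k])))"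

definition I_wins_G1 :: "nat set set \<Rightarrow> bool" where
  "I_wins_G1 F \<longleftrightarrow> (\<exists>\<sigma>. G1_winning_I F \<sigma>)"

definition II_wins_G1 :: "nat set set \<Rightarrow> bool" where
  "II_wins_G1 F \<longleftrightarrow> (\<exists>\<tau>. G1_winning_II F \<tau>)"

end

theory Submission
  imports Defs
begin

(* By Talagrand's characterisation, a filter F is meager iff some partition of omega into
   finite intervals (blocks) is such that every member of F meets almost all blocks.
   Such a partition is a winning strategy for player I in both games: I always demands
   moves beyond the block covering everything played so far, so the set built by II misses
   infinitely many blocks. Conversely, a winning strategy of I yields a partition whose
   blocks outrun I's answers to all small positions; if a member of F missed infinitely
   many of these blocks, II could play inside it and win. Player II never wins: running
   two plays against a strategy of II, where I keeps each play away from (in G) or above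
   (in G_1) all that II has played so far, produces two members of F with finite
   intersection, which a proper filter cannot contain. *)

lemma filter_mono: "is_filter F \<Longrightarrow> A \<in> F \<Longrightarrow> A \<subseteq> B \<Longrightarrow> B \<in> F"
  unfolding is_filter_def by blast

lemma filter_Int: "is_filter F \<Longrightarrow> A \<in> F \<Longrightarrow> B \<in> F \<Longrightarrow> A \<inter> B \<in> F"
  unfolding is_filter_def by blast

lemma atLeast_in_Fr: "{c::nat..} \<in> Fr"
  unfolding Fr_def by simp

lemma filter_Int_atLeast: "is_filter F \<Longrightarrow> A \<in> F \<Longrightarrow> A \<inter> {c..} \<in> F"
  using filter_Int atLeast_in_Fr unfolding is_filter_def by blast

section \<open>Cylinders in Cantor space\<close>

definition cylinder :: "nat set \<Rightarrow> nat \<Rightarrow> (nat \<Rightarrow> bool) set" where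
  "cylinder S b = {f. \<forall>i<b. f i \<longleftrightarrow> i \<in> S}"

lemma topspace_cantor_top [simp]: "topspace cantor_top = UNIV"
  unfolding cantor_top_def by (simp add: PiE_UNIV_domain)

lemma openin_cylinder: "openin cantor_top (cylinder S b)"
proof -
  define X where "X i = {v. i < b \<longrightarrow> v = (i \<in> S)}" for i
  have "openin cantor_top (\<Pi>\<^sub>E i\<in>UNIV. X i)"
    unfolding cantor_top_def
    by (rule product_topology_basis) (auto simp: X_def intro: finite_subset[of _ "{..<b}"])
  moreover have "(\<Pi>\<^sub>E i\<in>UNIV. X i) = cylinder S b"
    by (auto simp: X_def cylinder_def PiE_iff)
  ultimately show ?thesis by simp
qed

lemma openin_cantor_top_contains_cylinder:
  assumes "openin cantor_top U" "f \<in> U"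
  shows "\<exists>b. cylinder {i. f i} b \<subseteq> U"
proof -
  obtain X where X: "f \<in> (\<Pi>\<^sub>E i\<in>UNIV. X i)" "finite {i. X i \<noteq> UNIV}" "(\<Pi>\<^sub>E i\<in>UNIV. X i) \<subseteq> U"
    using product_topology_open_contains_basis[OF assms[unfolded cantor_top_def]] by auto
  obtain b where "\<And>i. X i \<noteq> UNIV \<Longrightarrow> i < b"
    using finite_nat_bounded[OF X(2)] by auto
  then have "cylinder {i. f i} b \<subseteq> (\<Pi>\<^sub>E i\<in>UNIV. X i)"
    using X(1) by (fastforce simp: cylinder_def PiE_iff)
  with X(3) show ?thesis by blast
qed

lemma openin_cantor_top_finitary:
  assumes "\<And>f g. f \<in> C \<Longrightarrow> \<forall>i<b. g i = f i \<Longrightarrow> g \<in> C"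
  shows "openin cantor_top C"
proof -
  have "C = (\<Union>f\<in>C. cylinder {i. f i} b)"
    using assms by (auto simp: cylinder_def)
  also have "openin cantor_top \<dots>"
    by (intro openin_Union) (auto intro: openin_cylinder)
  finally show ?thesis .
qed

lemma closedin_cantor_top_finitary:
  assumes "\<And>f g. f \<in> C \<Longrightarrow> \<forall>i<b. g i = f i \<Longrightarrow> g \<in> C"
  shows "closedin cantor_top C"
proof -
  have "openin cantor_top (- C)"
  proof (rule openin_cantor_top_finitary)
    fix f g assume "f \<in> - C" "\<forall>i<b. g i = f i"
    then show "g \<in> - C" using assms[of g f] by auto
  qed
  then show ?thesis
    by (simp add: closedin_def Compl_eq_Diff_UNIV)
qed

lemma nowhere_dense_in_cantor_top:
  assumes "closedin cantor_top N" and "\<And>S b. \<not> cylinder S b \<subseteq> N"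
  shows "nowhere_dense_in cantor_top N"
proof -
  have "T = {}" if T: "openin cantor_top T" "T \<subseteq> N" for T
  proof (rule ccontr)
    assume "T \<noteq> {}"
    then obtain f where "f \<in> T" by blast
    then obtain b where "cylinder {i. f i} b \<subseteq> T"
      using openin_cantor_top_contains_cylinder[OF T(1)] by blast
    then have "cylinder {i. f i} b \<subseteq> N"
      using T(2) by (rule subset_trans)
    with assms(2) show False by blast
  qed
  then have "cantor_top interior_of N = {}"
    unfolding interior_of_eq_empty by blast
  then show ?thesis
    using assms(1) by (simp add: nowhere_dense_in_def closure_of_closedin)
qed

lemma nowhere_dense_avoiding_cylinder:
  assumes "nowhere_dense_in cantor_top N" and "S \<subseteq> {..<a}"
  shows "\<exists>b>a. \<exists>u\<subseteq>{a..<b}. cylinder (S \<union> u) b \<inter> N = {}"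
proof -
  let ?C = "cantor_top closure_of N"
  have "\<not> cylinder S a \<subseteq> ?C"
  proof
    assume "cylinder S a \<subseteq> ?C"
    then have "cylinder S a \<subseteq> cantor_top interior_of ?C"
      by (simp add: interior_of_maximal openin_cylinder)
    moreover have "(\<lambda>i. i \<in> S) \<in> cylinder S a"
      by (simp add: cylinder_def)
    ultimately show False
      using assms(1) by (auto simp: nowhere_dense_in_def)
  qed
  then obtain f where f: "f \<in> cylinder S a" "f \<notin> ?C" by blast
  have "openin cantor_top (- ?C)"
    using closedin_closure_of[of cantor_top N] by (simp add: closedin_def Compl_eq_Diff_UNIV)
  then obtain b' where b': "cylinder {i. f i} b' \<subseteq> - ?C"
    using openin_cantor_top_contains_cylinder f(2) by blast
  define b where "b = max b' (Suc a)"
  define u where "u = {i. f i} \<inter> {a..<b}"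
  have "cylinder (S \<union> u) b \<subseteq> cylinder {i. f i} b'"
  proof
    fix g assume g: "g \<in> cylinder (S \<union> u) b"
    have "g i = f i" if "i < b'" for i
    proof (cases "i < a")
      case True
      then show ?thesis using f(1) g that by (simp add: cylinder_def b_def u_def)
    next
      case False
      then show ?thesis using assms(2) g that by (auto simp: cylinder_def b_def u_def)
    qed
    then show "g \<in> cylinder {i. f i} b'" by (simp add: cylinder_def)
  qed
  with b' have "cylinder (S \<union> u) b \<inter> N = {}"
    using closure_of_subset[of N cantor_top] by auto
  moreover have "b > a" "u \<subseteq> {a..<b}" by (auto simp: b_def u_def)
  ultimately show ?thesis by blast
qed

lemma nowhere_dense_avoiding_cylinders:
  assumes "finite P" and "\<forall>(S, N)\<in>P. S \<subseteq> {..<a} \<and> nowhere_dense_in cantor_top N"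
  shows "\<exists>b>a. \<exists>u\<subseteq>{a..<b}. \<forall>(S, N)\<in>P. cylinder (S \<union> u) b \<inter> N = {}"
  using assms
proof (induction P rule: finite_induct)
  case empty
  show ?case by (intro exI[of _ "Suc a"] exI[of _ "{}"]) auto
next
  case (insert SN P)
  obtain S N where SN: "SN = (S, N)" by fastforce
  obtain b u where bu: "b > a" "u \<subseteq> {a..<b}" "\<forall>(S, N)\<in>P. cylinder (S \<union> u) b \<inter> N = {}"
    using insert.IH insert.prems by auto
  have S: "S \<subseteq> {..<a}" and N: "nowhere_dense_in cantor_top N"
    using insert.prems by (simp_all add: SN)
  with bu(1,2) have "S \<union> u \<subseteq> {..<b}" by auto
  from nowhere_dense_avoiding_cylinder[OF N this]
  obtain b' u' where bu': "b' > b" "u' \<subseteq> {b..<b'}" "cylinder (S \<union> u \<union> u') b' \<inter> N = {}"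
    by auto
  have shrink: "cylinder (S' \<union> (u \<union> u')) b' \<subseteq> cylinder (S' \<union> u) b" for S'
    using bu'(1,2) by (auto simp: cylinder_def)
  have "cylinder (S' \<union> (u \<union> u')) b' \<inter> N' = {}" if "(S', N') \<in> insert SN P" for S' N'
  proof (cases "(S', N') = SN")
    case True
    then show ?thesis using bu'(3) by (simp add: SN Un_assoc)
  next
    case False
    then have "cylinder (S' \<union> u) b \<inter> N' = {}" using bu(3) that by auto
    then show ?thesis using shrink[of S'] by blast
  qed
  then have "\<forall>(S', N')\<in>insert SN P. cylinder (S' \<union> (u \<union> u')) b' \<inter> N' = {}"
    by auto
  moreover have "b' > a" "u \<union> u' \<subseteq> {a..<b'}" using bu bu' by auto
  ultimately show ?case by blast
qed

section \<open>Talagrand's characterisation of meager filters\<close>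

definition block :: "(nat \<Rightarrow> nat) \<Rightarrow> nat \<Rightarrow> nat set" where
  "block a j = {a j..<a (Suc j)}"

definition meets_almost_all_blocks :: "nat set set \<Rightarrow> (nat \<Rightarrow> nat) \<Rightarrow> bool" where
  "meets_almost_all_blocks F a \<longleftrightarrow> strict_mono a \<and> (\<forall>A\<in>F. finite {j. A \<inter> block a j = {}})"

lemma block_disjoint:
  assumes "strict_mono a" "j \<noteq> j'"
  shows "block a j \<inter> block a j' = {}"
proof -
  have disj: "block a i \<inter> block a i' = {}" if "i < i'" for i i'
  proof -
    have "a (Suc i) \<le> a i'"
      using that assms(1) by (simp add: strict_mono_less_eq)
    then show ?thesis by (auto simp: block_def)
  qed
  show ?thesis
    using disj[of j j'] disj[of j' j] assms(2) by (metis Int_commute linorder_neqE_nat)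
qed

lemma UN_block:
  assumes "strict_mono c"
  shows "(\<Union>k. block c k) = {c 0..}"
proof
  show "{c 0..} \<subseteq> (\<Union>k. block c k)"
  proof
    fix x assume x: "x \<in> {c 0..}"
    have "x < c (Suc x)"
      using strict_mono_imp_increasing[OF assms, of "Suc x"] by simp
    then have ex: "\<exists>k. x < c (Suc k)" by blast
    define k where "k = (LEAST k. x < c (Suc k))"
    have "x < c (Suc k)" unfolding k_def using ex by (rule LeastI_ex)
    moreover have "c k \<le> x"
    proof (cases k)
      case (Suc k')
      then show ?thesis using not_less_Least[of k' "\<lambda>k. x < c (Suc k)"] by (auto simp: k_def)
    qed (use x in simp)
    ultimately show "x \<in> (\<Union>k. block c k)" by (auto simp: block_def)
  qed
  show "(\<Union>k. block c k) \<subseteq> {c 0..}"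
  proof
    fix x assume "x \<in> (\<Union>k. block c k)"
    then obtain k where "c k \<le> x" by (auto simp: block_def)
    moreover have "c 0 \<le> c k"
      using assms by (simp add: strict_mono_less_eq)
    ultimately show "x \<in> {c 0..}" by simp
  qed
qed

lemma meager_if_meets_almost_all_blocks:
  assumes "meets_almost_all_blocks F a"
  shows "meager_family F"
proof -
  have a: "strict_mono a" and fin: "\<And>A. A \<in> F \<Longrightarrow> finite {j. A \<inter> block a j = {}}"
    using assms unfolding meets_almost_all_blocks_def by auto
  define N where "N m = (\<Inter>j\<in>{m..}. {f. \<exists>i\<in>block a j. f i})" for m
  have "closedin cantor_top {f. \<exists>i\<in>block a j. f i}" for j
    by (rule closedin_cantor_top_finitary[of _ "a (Suc j)"]) (auto simp: block_def)
  then have closed: "closedin cantor_top (N m)" for m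
    unfolding N_def by blast
  have "\<not> cylinder S b \<subseteq> N m" for S b m
  proof
    assume sub: "cylinder S b \<subseteq> N m"
    define j where "j = max m b"
    have "(\<lambda>i. i < b \<and> i \<in> S) \<in> N m"
      using sub by (auto simp: cylinder_def)
    moreover have "j \<in> {m..}" by (simp add: j_def)
    ultimately obtain i where "i \<in> block a j" "i < b"
      by (auto simp: N_def)
    moreover have "b \<le> a j"
      using strict_mono_imp_increasing[OF a, of j] by (simp add: j_def)
    ultimately show False by (simp add: block_def)
  qed
  with closed have "nowhere_dense_in cantor_top (N m)" for m
    by (rule nowhere_dense_in_cantor_top)
  moreover have "char_set F \<subseteq> (\<Union>m. N m)"
  proof
    fix f assume "f \<in> char_set F"
    then have "finite {j. {n. f n} \<inter> block a j = {}}"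
      by (simp add: char_set_def fin)
    from finite_nat_bounded[OF this]
    obtain m where m: "\<And>j. {n. f n} \<inter> block a j = {} \<Longrightarrow> j < m"
      by auto
    have "\<exists>i\<in>block a j. f i" if "m \<le> j" for j
    proof (rule ccontr)
      assume "\<not> (\<exists>i\<in>block a j. f i)"
      then have "{n. f n} \<inter> block a j = {}" by auto
      with m that show False by (metis not_le)
    qed
    then have "f \<in> N m" by (simp add: N_def)
    then show "f \<in> (\<Union>m. N m)" by blast
  qed
  ultimately show ?thesis
    unfolding meager_family_def meager_in_def by blast
qed

lemma meets_almost_all_blocks_if_meager:
  assumes filter: "is_filter F" and "meager_family F"
  shows "\<exists>a. meets_almost_all_blocks F a"
proof -
  obtain N :: "nat \<Rightarrow> (nat \<Rightarrow> bool) set" where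
    nd: "\<forall>k. nowhere_dense_in cantor_top (N k)" and cover: "char_set F \<subseteq> (\<Union>k. N k)"
    using assms(2) unfolding meager_family_def meager_in_def by blast
  have "\<exists>b u. c < b \<and> u \<subseteq> {c..<b} \<and>
      (\<forall>S\<subseteq>{..<c}. \<forall>k\<le>n. cylinder (S \<union> u) b \<inter> N k = {})" for c n
  proof -
    have "finite (Pow {..<c} \<times> N ` {..n})" by simp
    moreover have
      "\<forall>(S, N')\<in>Pow {..<c} \<times> N ` {..n}. S \<subseteq> {..<c} \<and> nowhere_dense_in cantor_top N'"
      using nd by auto
    ultimately have
      "\<exists>b>c. \<exists>u\<subseteq>{c..<b}. \<forall>(S, N')\<in>Pow {..<c} \<times> N ` {..n}. cylinder (S \<union> u) b \<inter> N' = {}"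
      by (rule nowhere_dense_avoiding_cylinders)
    then obtain b u where "c < b" "u \<subseteq> {c..<b}"
      "\<forall>(S, N')\<in>Pow {..<c} \<times> N ` {..n}. cylinder (S \<union> u) b \<inter> N' = {}"
      by auto
    then show ?thesis by (intro exI[of _ b] exI[of _ u]) auto
  qed
  then obtain nb nu where ext: "\<And>c n. c < nb c n" "\<And>c n. nu c n \<subseteq> {c..<nb c n}"
    "\<And>c n S k. S \<subseteq> {..<c} \<Longrightarrow> k \<le> n \<Longrightarrow> cylinder (S \<union> nu c n) (nb c n) \<inter> N k = {}"
    by metis
  text \<open>Whatever a set looks like below \<open>a n\<close>, agreeing with \<open>U n\<close> on block \<open>n\<close> keeps
    it out of \<open>N 0, \<dots>, N n\<close>.\<close>
  define a where "a = rec_nat 0 (\<lambda>n c. nb c n)"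
  define U where "U n = nu (a n) n" for n
  have a_Suc: "a (Suc n) = nb (a n) n" for n
    by (simp add: a_def)
  have a: "strict_mono a"
    using ext(1) by (simp add: strict_mono_Suc_iff a_Suc)
  have U_block: "U n \<subseteq> block a n" for n
    using ext(2) by (simp add: U_def block_def a_Suc)
  have avoid: "cylinder (S \<union> U n) (a (Suc n)) \<inter> N k = {}" if "S \<subseteq> {..<a n}" "k \<le> n" for S n k
    using ext(3)[OF that] by (simp add: U_def a_Suc)
  have "finite {j. A \<inter> block a j = {}}" if A: "A \<in> F" for A
  proof (rule ccontr)
    define J where "J = {j. A \<inter> block a j = {}}"
    assume "infinite {j. A \<inter> block a j = {}}"
    then have J: "infinite J" by (simp add: J_def)
    text \<open>Filling the missed blocks with the avoiding patterns \<open>U j\<close> gives a member of \<open>F\<close>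
      outside every \<open>N k\<close>.\<close>
    define B where "B = A \<union> (\<Union>j\<in>J. U j)"
    have "B \<in> F"
      using filter_mono[OF filter A] by (simp add: B_def)
    then have "(\<lambda>i. i \<in> B) \<in> char_set F"
      by (simp add: char_set_def)
    with cover obtain k where k: "(\<lambda>i. i \<in> B) \<in> N k"
      by blast
    obtain j where j: "j \<in> J" "k \<le> j"
      using J by (meson infinite_nat_iff_unbounded_le)
    have "B \<inter> block a j = U j"
    proof
      show "U j \<subseteq> B \<inter> block a j"
        using U_block j(1) by (auto simp: B_def)
      have "U j' \<inter> block a j = {}" if "j' \<noteq> j" for j'
        using U_block[of j'] block_disjoint[OF a that] by blast
      then show "B \<inter> block a j \<subseteq> U j"
        using j(1) by (auto simp: B_def J_def) (metis IntI empty_iff)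
    qed
    then have "(\<lambda>i. i \<in> B) \<in> cylinder ((B \<inter> {..<a j}) \<union> U j) (a (Suc j))"
      using U_block[of j] by (auto simp: cylinder_def block_def)
    with avoid[of "B \<inter> {..<a j}" j k] j(2) k show False
      by auto
  qed
  with a show ?thesis
    unfolding meets_almost_all_blocks_def by blast
qed

theorem meager_family_iff_meets_almost_all_blocks:
  assumes "is_filter F"
  shows "meager_family F \<longleftrightarrow> (\<exists>a. meets_almost_all_blocks F a)"
  using assms meager_if_meets_almost_all_blocks meets_almost_all_blocks_if_meager by blast

section \<open>The game G(Fr, finite sets, F)\<close>

definition cover_index :: "(nat \<Rightarrow> nat) \<Rightarrow> nat set \<Rightarrow> nat" where
  "cover_index a S = (LEAST j. S \<subseteq> {..<a j})"

lemma subset_cover_index: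
  assumes "strict_mono a" "finite S"
  shows "S \<subseteq> {..<a (cover_index a S)}"
proof -
  obtain b where "S \<subseteq> {..<b}"
    using finite_nat_bounded[OF assms(2)] by auto
  also have "{..<b} \<subseteq> {..<a b}"
    using strict_mono_imp_increasing[OF assms(1), of b] by auto
  finally show ?thesis
    unfolding cover_index_def by (rule LeastI)
qed

lemma cover_index_mono:
  assumes "strict_mono a" "finite T" "S \<subseteq> T"
  shows "cover_index a S \<le> cover_index a T"
proof -
  have "S \<subseteq> {..<a (cover_index a T)}"
    using subset_cover_index[OF assms(1,2)] assms(3) by (rule order_trans[rotated])
  then show ?thesis
    unfolding cover_index_def[of a S] by (rule Least_le)
qed

text \<open>A move lying above the block that covers all earlier moves makes that block missed.\<close>

lemma infinite_missed_blocks: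
  fixes T :: "nat \<Rightarrow> nat set"
  assumes a: "strict_mono a" and fin: "\<And>k. finite (T k)" and K: "infinite K"
    and nonempty: "\<And>k. k \<in> K \<Longrightarrow> T k \<noteq> {}"
    and above: "\<And>k i. k \<in> K \<Longrightarrow> k \<le> i \<Longrightarrow> T i \<subseteq> {a (Suc (cover_index a (\<Union>(T ` {..<k}))))..}"
  shows "infinite {j. (\<Union>k. T k) \<inter> block a j = {}}"
proof -
  define c where "c k = cover_index a (\<Union>(T ` {..<k}))" for k
  have below: "\<Union>(T ` {..<k}) \<subseteq> {..<a (c k)}" for k
    unfolding c_def by (rule subset_cover_index[OF a]) (simp add: fin finite_UN_I)
  have missed: "(\<Union>k. T k) \<inter> block a (c k) = {}" if k: "k \<in> K" for k
  proof -
    have "T i \<inter> block a (c k) = {}" for i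
    proof (cases "i < k")
      case True
      then show ?thesis using below[of k] by (auto simp: block_def)
    next
      case False
      then show ?thesis using above[OF k, of i] by (auto simp: block_def c_def)
    qed
    then show ?thesis by blast
  qed
  have c_less: "c k < c k'" if k: "k \<in> K" "k < k'" for k k'
  proof -
    obtain x where x: "x \<in> T k"
      using nonempty[OF k(1)] by blast
    then have "a (Suc (c k)) \<le> x"
      using above[OF k(1), of k] by (auto simp: c_def)
    moreover have "x < a (c k')"
      using below[of k'] x k(2) by auto
    ultimately have "a (Suc (c k)) < a (c k')" by linarith
    then show ?thesis
      using strict_mono_less[OF a] by simp
  qed
  have "inj_on c K"
    by (rule inj_onI) (metis c_less less_irrefl linorder_neqE_nat)
  with K have "infinite (c ` K)"
    using finite_imageD by blast
  moreover have "c ` K \<subseteq> {j. (\<Union>k. T k) \<inter> block a j = {}}"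
    using missed by blast
  ultimately show ?thesis
    using finite_subset by blast
qed

lemma I_wins_G_if_meets_almost_all_blocks:
  assumes "meets_almost_all_blocks F a"
  shows "I_wins_G Fr F"
proof -
  have a: "strict_mono a" and fin: "\<And>A. A \<in> F \<Longrightarrow> finite {j. A \<inter> block a j = {}}"
    using assms unfolding meets_almost_all_blocks_def by auto
  define \<sigma> where "\<sigma> l = {a (Suc (cover_index a (\<Union>(set l))))..}" for l
  have "G_winning_I Fr F \<sigma>"
    unfolding G_winning_I_def
  proof (intro allI conjI impI)
    fix s :: "nat \<Rightarrow> nat set" and k
    show "\<sigma> (map s [0..<k]) \<in> Fr"
      by (simp add: \<sigma>_def atLeast_in_Fr)
  next
    fix s :: "nat \<Rightarrow> nat set"
    assume "\<forall>k. G_legal_II (\<sigma> (map s [0..<k])) (s k)"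
    then have s: "finite (s k)" "s k \<noteq> {}"
      "s k \<subseteq> {a (Suc (cover_index a (\<Union>(s ` {..<k}))))..}" for k
      by (auto simp: G_legal_II_def \<sigma>_def atLeast0LessThan)
    have above: "s i \<subseteq> {a (Suc (cover_index a (\<Union>(s ` {..<k}))))..}" if "k \<le> i" for k i
    proof -
      have "\<Union>(s ` {..<k}) \<subseteq> \<Union>(s ` {..<i})"
        using that by (intro Union_mono image_mono) auto
      then have "cover_index a (\<Union>(s ` {..<k})) \<le> cover_index a (\<Union>(s ` {..<i}))"
        using cover_index_mono[OF a] by (simp add: s(1) finite_UN_I)
      then have "{a (Suc (cover_index a (\<Union>(s ` {..<i}))))..} \<subseteq> {a (Suc (cover_index a (\<Union>(s ` {..<k}))))..}"
        using a by (simp add: strict_mono_less_eq)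
      with s(3)[of i] show ?thesis
        by (rule order_trans)
    qed
    have "infinite {j. (\<Union>k. s k) \<inter> block a j = {}}"
      by (rule infinite_missed_blocks[OF a s(1) infinite_UNIV_nat]) (use s(2) above in auto)
    with fin show "(\<Union>k. s k) \<notin> F" by blast
  qed
  then show ?thesis
    by (auto simp: I_wins_G_def)
qed

definition threshold :: "nat set \<Rightarrow> nat" where
  "threshold X = (LEAST t. {t..} \<subseteq> X)"

lemma atLeast_threshold_subset:
  assumes "X \<in> Fr"
  shows "{threshold X..} \<subseteq> X"
proof -
  from assms have "finite (- X)" by (simp add: Fr_def)
  from finite_nat_bounded[OF this] obtain b where "- X \<subseteq> {..<b}" by auto
  then have "{b..} \<subseteq> X" by auto
  then show ?thesis
    unfolding threshold_def by (rule LeastI)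
qed

definition short_lists :: "'a set \<Rightarrow> nat \<Rightarrow> 'a list set" where
  "short_lists B n = {l. set l \<subseteq> B \<and> length l \<le> n}"

lemma finite_short_lists: "finite B \<Longrightarrow> finite (short_lists B n)"
  unfolding short_lists_def by (rule finite_lists_length_le)

primrec dominating_seq :: "('a list \<Rightarrow> nat) \<Rightarrow> (nat \<Rightarrow> 'a set) \<Rightarrow> nat \<Rightarrow> nat" where
  "dominating_seq h B 0 = 0"
| "dominating_seq h B (Suc j) =
     Suc (max (dominating_seq h B j)
       (Max (h ` short_lists (B (dominating_seq h B j)) (dominating_seq h B j))))"

lemma strict_mono_dominating_seq: "strict_mono (dominating_seq h B)"
  by (simp add: strict_mono_Suc_iff less_Suc_eq_le)

lemma dominating_seq_dominates:
  assumes "finite (B (dominating_seq h B j))"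
    and "l \<in> short_lists (B (dominating_seq h B j)) (dominating_seq h B j)"
  shows "h l < dominating_seq h B (Suc j)"
proof -
  have "h l \<le> Max (h ` short_lists (B (dominating_seq h B j)) (dominating_seq h B j))"
    using assms by (simp add: finite_short_lists)
  then show ?thesis by simp
qed

lemma sparse_enumeration:
  fixes J :: "nat set"
  assumes "infinite J"
  obtains g where "\<And>k. g k \<in> J" and "\<And>k. Suc (g k) < g (Suc k)"
proof -
  define g where "g k = enumerate J (2 * k)" for k
  have "g k \<in> J" for k
    unfolding g_def using enumerate_in_set[OF assms] .
  moreover have "Suc (g k) < g (Suc k)" for k
    using enumerate_step[OF assms, of "2 * k"] enumerate_step[OF assms, of "Suc (2 * k)"]
    by (simp add: g_def)
  ultimately show thesis by (rule that)
qed

lemma subset_UN_between_missed_blocks: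
  assumes a: "strict_mono a" and gap: "\<And>k. Suc (g k) < g (Suc k)"
    and missed: "\<And>k. A \<inter> block a (g k) = {}"
  shows "A \<inter> {a (Suc (g 0))..} \<subseteq> (\<Union>k. A \<inter> {a (Suc (g k))..<a (g (Suc k))})"
proof
  fix x assume x: "x \<in> A \<inter> {a (Suc (g 0))..}"
  have "strict_mono g"
    using gap by (simp add: strict_mono_Suc_iff Suc_lessD)
  then have "strict_mono (\<lambda>k. a (Suc (g k)))"
    using a by (simp add: strict_mono_def)
  then have "x \<in> (\<Union>k. block (\<lambda>k. a (Suc (g k))) k)"
    using x by (simp add: UN_block)
  then obtain k where k: "a (Suc (g k)) \<le> x" "x < a (Suc (g (Suc k)))"
    by (auto simp: block_def)
  moreover have "x \<notin> block a (g (Suc k))"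
    using missed[of "Suc k"] x by auto
  ultimately have "x \<in> A \<inter> {a (Suc (g k))..<a (g (Suc k))}"
    using x by (auto simp: block_def)
  then show "x \<in> (\<Union>k. A \<inter> {a (Suc (g k))..<a (g (Suc k))})" by blast
qed

lemma meets_almost_all_blocks_if_dominates_G_strategy:
  assumes filter: "is_filter F" and win: "G_winning_I Fr F \<sigma>" and a: "strict_mono a"
    and dominates: "\<And>l j. l \<in> short_lists (Pow {..<a j}) (a j) \<Longrightarrow> \<sigma> l \<in> Fr \<Longrightarrow>
      {a (Suc j)..} \<subseteq> \<sigma> l"
  shows "meets_almost_all_blocks F a"
proof -
  have "finite {j. A \<inter> block a j = {}}" if A: "A \<in> F" for A
  proof (rule ccontr)
    define J where "J = {j. A \<inter> block a j = {}}"
    assume "infinite {j. A \<inter> block a j = {}}"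
    then have J: "infinite J" by (simp add: J_def)
    text \<open>Skipping missed blocks leaves II room for a nonempty move between consecutive ones.\<close>
    obtain g where gJ: "\<And>k. g k \<in> J" and g_gap: "\<And>k. Suc (g k) < g (Suc k)"
      using sparse_enumeration[OF J] by blast
    from g_gap have g: "strict_mono g"
      by (simp add: strict_mono_Suc_iff Suc_lessD)
    define s where "s k = A \<inter> {a (Suc (g k))..<a (g (Suc k))} \<union> {a (g (Suc k)) - 1}" for k
    have gap: "a (Suc (g k)) < a (g (Suc k))" for k
      using g_gap a by (simp add: strict_mono_less)
    have s_sub: "s k \<subseteq> {a (Suc (g k))..<a (g (Suc k))}" for k
      using gap[of k] by (auto simp: s_def)
    have "A \<inter> block a (g k) = {}" for k
      using gJ[of k] by (simp add: J_def)
    with a g_gap have "A \<inter> {a (Suc (g 0))..} \<subseteq> (\<Union>k. A \<inter> {a (Suc (g k))..<a (g (Suc k))})"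
      by (rule subset_UN_between_missed_blocks)
    also have "\<dots> \<subseteq> (\<Union>k. s k)"
      by (intro UN_mono) (auto simp: s_def)
    finally have cover: "A \<inter> {a (Suc (g 0))..} \<subseteq> (\<Union>k. s k)" .
    have position: "map s [0..<k] \<in> short_lists (Pow {..<a (g k)}) (a (g k))" for k
    proof -
      have "s i \<subseteq> {..<a (g k)}" if "i < k" for i
      proof -
        have "a (g (Suc i)) \<le> a (g k)"
          using that g a by (simp add: strict_mono_less_eq)
        then show ?thesis using s_sub[of i] by auto
      qed
      moreover have "k \<le> a (g k)"
        using strict_mono_imp_increasing[OF g, of k] strict_mono_imp_increasing[OF a, of "g k"] by simp
      ultimately show ?thesis
        by (simp add: short_lists_def image_subset_iff atLeast0LessThan)
    qed
    have legal: "G_legal_II (\<sigma> (map s [0..<k])) (s k)" for k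
    proof (induction k rule: less_induct)
      case (less k)
      then have "\<sigma> (map s [0..<k]) \<in> Fr"
        using win unfolding G_winning_I_def by blast
      with position have "{a (Suc (g k))..} \<subseteq> \<sigma> (map s [0..<k])"
        by (rule dominates)
      moreover have "s k \<subseteq> {a (Suc (g k))..}"
        using s_sub[of k] by auto
      ultimately have "s k \<subseteq> \<sigma> (map s [0..<k])"
        by (rule order_trans[rotated])
      moreover have "finite (s k)" "s k \<noteq> {}"
        by (simp_all add: s_def)
      ultimately show ?case
        by (simp add: G_legal_II_def)
    qed
    then have "(\<Union>k. s k) \<notin> F"
      using win unfolding G_winning_I_def by blast
    moreover have "A \<inter> {a (Suc (g 0))..} \<in> F"
      using filter A by (rule filter_Int_atLeast)
    ultimately show False
      using cover filter_mono[OF filter] by blast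
  qed
  with a show ?thesis
    unfolding meets_almost_all_blocks_def by blast
qed

lemma meets_almost_all_blocks_if_I_wins_G:
  assumes "is_filter F" and "I_wins_G Fr F"
  shows "\<exists>a. meets_almost_all_blocks F a"
proof -
  obtain \<sigma> where win: "G_winning_I Fr F \<sigma>"
    using assms(2) by (auto simp: I_wins_G_def)
  define a where "a = dominating_seq (\<lambda>l. threshold (\<sigma> l)) (\<lambda>b. Pow {..<b})"
  have "{a (Suc j)..} \<subseteq> \<sigma> l" if "l \<in> short_lists (Pow {..<a j}) (a j)" "\<sigma> l \<in> Fr" for l j
  proof -
    have "threshold (\<sigma> l) < a (Suc j)"
      using that(1) unfolding a_def by (intro dominating_seq_dominates) auto
    then show ?thesis
      using atLeast_threshold_subset[OF that(2)] by auto
  qed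
  with assms(1) win strict_mono_dominating_seq have "meets_almost_all_blocks F a"
    unfolding a_def by (rule meets_almost_all_blocks_if_dominates_G_strategy)
  then show ?thesis by blast
qed

theorem I_wins_G_iff_meets_almost_all_blocks:
  assumes "is_filter F"
  shows "I_wins_G Fr F \<longleftrightarrow> (\<exists>a. meets_almost_all_blocks F a)"
  using assms I_wins_G_if_meets_almost_all_blocks meets_almost_all_blocks_if_I_wins_G by blast

lemma interleaved_unions_disjoint:
  fixes sA sB :: "nat \<Rightarrow> 'a set"
  assumes "\<And>k. sA k \<inter> (\<Union>i<k. sA i \<union> sB i) = {}"
    and "\<And>k. sB k \<inter> ((\<Union>i<k. sA i \<union> sB i) \<union> sA k) = {}"
  shows "(\<Union>k. sA k) \<inter> (\<Union>k. sB k) = {}"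
proof -
  have "sA i \<inter> sB j = {}" for i j
  proof (cases i j rule: linorder_cases)
    case less
    then show ?thesis using assms(2)[of j] by blast
  next
    case equal
    then show ?thesis using assms(2)[of j] by blast
  next
    case greater
    then show ?thesis using assms(1)[of i] by blast
  qed
  then show ?thesis by blast
qed

lemma disjoint_outcomes_if_G_winning_II:
  assumes win: "G_winning_II Fr Z \<tau>"
  shows "\<exists>A\<in>Z. \<exists>B\<in>Z. A \<inter> B = {}"
proof -
  text \<open>Player I runs two plays against \<open>\<tau>\<close>, each time offering the complement of all that
    II has chosen so far in either play. The test \<open>finite U\<close> only makes every move legal a
    priori; it always succeeds.\<close>
  define avoid :: "nat set \<Rightarrow> nat set" where "avoid U = (if finite U then - U else UNIV)" for U
  define next_state where "next_state = (\<lambda>(LA, LB, U).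
    let LA' = LA @ [avoid U]; LB' = LB @ [avoid (U \<union> \<tau> LA')] in (LA', LB', U \<union> \<tau> LA' \<union> \<tau> LB'))"
  define state where "state k = (next_state ^^ k) ([], [], {})" for k
  define XA where "XA k = avoid (snd (snd (state k)))" for k
  define sA where "sA k = \<tau> (map XA [0..<Suc k])" for k
  define XB where "XB k = avoid (snd (snd (state k)) \<union> sA k)" for k
  define sB where "sB k = \<tau> (map XB [0..<Suc k])" for k
  define U where "U k = (\<Union>i<k. sA i \<union> sB i)" for k
  have U_Suc: "U (Suc k) = U k \<union> sA k \<union> sB k" for k
    by (auto simp: U_def lessThan_Suc)
  have state: "state k = (map XA [0..<k], map XB [0..<k], U k)" for k
  proof (induction k)
    case 0
    show ?case by (simp add: state_def U_def)
  next
    case (Suc k)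
    have XA: "XA k = avoid (U k)" and XB: "XB k = avoid (U k \<union> sA k)"
      using Suc.IH by (simp_all add: XA_def XB_def)
    have "\<tau> (map XA [0..<k] @ [avoid (U k)]) = sA k" "\<tau> (map XB [0..<k] @ [avoid (U k \<union> sA k)]) = sB k"
      by (simp_all add: sA_def sB_def XA XB)
    then have "next_state (state k) = (map XA [0..<Suc k], map XB [0..<Suc k], U (Suc k))"
      by (simp add: Suc.IH next_state_def Let_def XA XB U_Suc)
    then show ?case by (simp add: state_def)
  qed
  have XA: "XA k = avoid (U k)" and XB: "XB k = avoid (U k \<union> sA k)" for k
    using state by (simp_all add: XA_def XB_def)
  have "\<forall>k. XA k \<in> Fr" "\<forall>k. XB k \<in> Fr"
    by (simp_all add: XA XB avoid_def Fr_def)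
  then have A: "\<forall>k. G_legal_II (XA k) (sA k)" "(\<Union>k. sA k) \<in> Z"
    and B: "\<forall>k. G_legal_II (XB k) (sB k)" "(\<Union>k. sB k) \<in> Z"
    using win unfolding G_winning_II_def sA_def sB_def by blast+
  then have "finite (U k)" for k
    by (simp add: U_def G_legal_II_def)
  then have "sA k \<inter> U k = {}" "sB k \<inter> (U k \<union> sA k) = {}" for k
    using A(1) B(1) by (auto simp: XA XB avoid_def G_legal_II_def)
  then have "(\<Union>k. sA k) \<inter> (\<Union>k. sB k) = {}"
    unfolding U_def by (rule interleaved_unions_disjoint)
  with A(2) B(2) show ?thesis by blast
qed

lemma not_II_wins_G:
  assumes "proper_filter F"
  shows "\<not> II_wins_G Fr F"
proof
  assume "II_wins_G Fr F"
  then obtain \<tau> where "G_winning_II Fr F \<tau>"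
    by (auto simp: II_wins_G_def)
  then obtain A B where "A \<in> F" "B \<in> F" "A \<inter> B = {}"
    using disjoint_outcomes_if_G_winning_II by blast
  moreover have "A \<inter> B \<in> F"
    using assms \<open>A \<in> F\<close> \<open>B \<in> F\<close> filter_Int by (simp add: proper_filter_def)
  ultimately show False
    using assms by (auto simp: proper_filter_def)
qed

section \<open>The game G_1(F)\<close>

lemma I_wins_G1_if_meets_almost_all_blocks:
  assumes "meets_almost_all_blocks F a"
  shows "I_wins_G1 F"
proof -
  have a: "strict_mono a" and fin: "\<And>A. A \<in> F \<Longrightarrow> finite {j. A \<inter> block a j = {}}"
    using assms unfolding meets_almost_all_blocks_def by auto
  define \<sigma> where "\<sigma> l = a (Suc (cover_index a (set l)))" for l
  have "G1_winning_I F \<sigma>"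
    unfolding G1_winning_I_def
  proof (intro allI notI)
    fix n :: "nat \<Rightarrow> nat"
    assume "G1_II_wins_play F (\<lambda>k. \<sigma> (map n [0..<k])) n"
    then have n: "strict_mono n" and K: "infinite {k. \<sigma> (map n [0..<k]) < n k}" and "range n \<in> F"
      by (auto simp: G1_II_wins_play_def INFM_iff_infinite)
    define T where "T k = {n k}" for k
    have prefix: "\<Union>(T ` {..<k}) = set (map n [0..<k])" for k
      by (auto simp: T_def atLeast0LessThan)
    have "infinite {j. (\<Union>k. T k) \<inter> block a j = {}}"
    proof (rule infinite_missed_blocks[OF a _ K])
      fix k i assume "k \<in> {k. \<sigma> (map n [0..<k]) < n k}" "k \<le> i"
      moreover from \<open>k \<le> i\<close> have "n k \<le> n i"
        using n by (simp add: strict_mono_less_eq)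
      ultimately have "\<sigma> (map n [0..<k]) < n i" by simp
      then show "T i \<subseteq> {a (Suc (cover_index a (\<Union>(T ` {..<k}))))..}"
        unfolding prefix by (simp add: T_def \<sigma>_def)
    qed (simp_all add: T_def)
    moreover have "(\<Union>k. T k) = range n"
      by (auto simp: T_def)
    ultimately show False
      using fin[OF \<open>range n \<in> F\<close>] by simp
  qed
  then show ?thesis
    by (auto simp: I_wins_G1_def)
qed

lemma short_lists_prefix:
  assumes "strict_mono n" "n ` {..<k} \<subseteq> {..<b}"
  shows "map n [0..<k] \<in> short_lists {..<b} b"
proof -
  have "k \<le> b"
    using card_mono[OF finite_lessThan assms(2)] card_image[OF strict_mono_imp_inj_on[OF assms(1)]]
    by simp
  with assms(2) show ?thesis
    by (auto simp: short_lists_def atLeast0LessThan)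
qed

lemma meets_almost_all_blocks_if_dominates_G1_strategy:
  assumes filter: "is_filter F" and win: "G1_winning_I F \<sigma>" and a: "strict_mono a"
    and dominates: "\<And>l j. l \<in> short_lists {..<a j} (a j) \<Longrightarrow> Suc (\<sigma> l) < a (Suc j)"
  shows "meets_almost_all_blocks F a"
proof -
  have "finite {j. A \<inter> block a j = {}}" if A: "A \<in> F" for A
  proof (rule ccontr)
    define J where "J = {j. A \<inter> block a j = {}}"
    assume "infinite {j. A \<inter> block a j = {}}"
    then have J: "infinite J" by (simp add: J_def)
    text \<open>II plays \<open>A\<close> together with the last point \<open>v j\<close> of every missed block \<open>j\<close>;
      whenever II reaches such a point, I's move lies below it.\<close>
    define v where "v j = a (Suc j) - 1" for j
    define R where "R = A \<union> v ` J"
    have a_less: "a j < a (Suc j)" for j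
      using a by (simp add: strict_mono_less)
    have v_block: "v j \<in> block a j" for j
      using a_less[of j] by (simp add: v_def block_def)
    have "v j < v (Suc j)" for j
      using a_less[of j] a_less[of "Suc j"] by (simp add: v_def)
    then have v: "strict_mono v"
      by (simp add: strict_mono_Suc_iff)
    have "infinite (v ` J)"
      using J strict_mono_imp_inj_on[OF v] by (simp add: finite_image_iff)
    then have "infinite R"
      by (simp add: R_def)
    define n where "n = enumerate R"
    have n: "strict_mono n" and range_n: "range n = R"
      using \<open>infinite R\<close> by (simp_all add: n_def strict_mono_enumerate range_enumerate)
    have "range n \<in> F"
      using filter_mono[OF filter A] by (simp add: range_n R_def)
    have below: "R \<inter> {..<v j} \<subseteq> {..<a j}" if j: "j \<in> J" for j
    proof
      fix x assume x: "x \<in> R \<inter> {..<v j}"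
      show "x \<in> {..<a j}"
      proof (cases "x \<in> A")
        case True
        then have "x \<notin> block a j" using j by (auto simp: J_def)
        then show ?thesis using x v_block[of j] by (auto simp: block_def)
      next
        case False
        then obtain j' where "x = v j'" using x by (auto simp: R_def)
        then have "j' < j"
          using x v by (auto simp: strict_mono_less)
        then have "a (Suc j') \<le> a j"
          using a by (simp add: strict_mono_less_eq)
        then show ?thesis
          using v_block[of j'] \<open>x = v j'\<close> by (auto simp: block_def)
      qed
    qed
    have late: "\<sigma> (map n [0..<k]) < n k" if k: "n k \<in> v ` J" for k
    proof -
      obtain j where j: "j \<in> J" "n k = v j" using k by blast
      have "n ` {..<k} \<subseteq> R \<inter> {..<v j}"
        using n by (auto simp: range_n[symmetric] j(2)[symmetric] strict_mono_less)
      then have "n ` {..<k} \<subseteq> {..<a j}"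
        using below[OF j(1)] by blast
      from dominates[OF short_lists_prefix[OF n this]] show ?thesis
        using j(2) by (simp add: v_def)
    qed
    have "v ` J \<subseteq> range n"
      using range_n by (simp add: R_def)
    with \<open>infinite (v ` J)\<close> have "infinite (n -` v ` J)"
      by (metis finite_vimageD')
    moreover have "n -` v ` J \<subseteq> {k. \<sigma> (map n [0..<k]) < n k}"
      using late by auto
    ultimately have "infinite {k. \<sigma> (map n [0..<k]) < n k}"
      by (metis infinite_super)
    then have "G1_II_wins_play F (\<lambda>k. \<sigma> (map n [0..<k])) n"
      using n \<open>range n \<in> F\<close> by (simp add: G1_II_wins_play_def INFM_iff_infinite)
    then show False
      using win by (simp add: G1_winning_I_def)
  qed
  with a show ?thesis
    unfolding meets_almost_all_blocks_def by blast
qed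

lemma meets_almost_all_blocks_if_I_wins_G1:
  assumes "is_filter F" and "I_wins_G1 F"
  shows "\<exists>a. meets_almost_all_blocks F a"
proof -
  obtain \<sigma> where win: "G1_winning_I F \<sigma>"
    using assms(2) by (auto simp: I_wins_G1_def)
  define a where "a = dominating_seq (\<lambda>l. Suc (\<sigma> l)) (\<lambda>b. {..<b})"
  have "Suc (\<sigma> l) < a (Suc j)" if "l \<in> short_lists {..<a j} (a j)" for l j
    using that unfolding a_def by (intro dominating_seq_dominates) auto
  with assms(1) win strict_mono_dominating_seq have "meets_almost_all_blocks F a"
    unfolding a_def by (rule meets_almost_all_blocks_if_dominates_G1_strategy)
  then show ?thesis by blast
qed

theorem I_wins_G1_iff_meets_almost_all_blocks:
  assumes "is_filter F"
  shows "I_wins_G1 F \<longleftrightarrow> (\<exists>a. meets_almost_all_blocks F a)"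
  using assms I_wins_G1_if_meets_almost_all_blocks meets_almost_all_blocks_if_I_wins_G1 by blast

lemma growing_lists_prefix:
  fixes P :: "nat \<Rightarrow> 'a list"
  assumes grow: "\<And>r. \<exists>w. P (Suc r) = P r @ w \<and> w \<noteq> []" and "r \<le> r'"
  shows "\<exists>w. P r' = P r @ w"
  using assms(2)
proof (induction r' rule: dec_induct)
  case (step r')
  then obtain w where "P r' = P r @ w" by blast
  moreover obtain w' where "P (Suc r') = P r' @ w'"
    using grow by blast
  ultimately show ?case by auto
qed simp

lemma growing_lists_length:
  fixes P :: "nat \<Rightarrow> 'a list"
  assumes grow: "\<And>r. \<exists>w. P (Suc r) = P r @ w \<and> w \<noteq> []"
  shows "r \<le> length (P r)"
proof (induction r)
  case (Suc r)
  obtain w where "P (Suc r) = P r @ w" "w \<noteq> []"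
    using grow by blast
  with Suc.IH show ?case by (cases w) auto
qed simp

definition chain_limit :: "(nat \<Rightarrow> 'a list) \<Rightarrow> nat \<Rightarrow> 'a" where
  "chain_limit P i = P (Suc i) ! i"

lemma growing_lists_limit:
  fixes P :: "nat \<Rightarrow> 'a list"
  assumes grow: "\<And>r. \<exists>w. P (Suc r) = P r @ w \<and> w \<noteq> []" and k: "k \<le> length (P r)"
  shows "map (chain_limit P) [0..<k] = take k (P r)"
proof (rule nth_equalityI)
  show "length (map (chain_limit P) [0..<k]) = length (take k (P r))"
    using k by simp
  fix i assume "i < length (map (chain_limit P) [0..<k])"
  then have i: "i < k" by simp
  define R where "R = max r (Suc i)"
  obtain w1 where w1: "P R = P r @ w1"
    using growing_lists_prefix[of P, OF grow, of r R] by (auto simp: R_def)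
  obtain w2 where w2: "P R = P (Suc i) @ w2"
    using growing_lists_prefix[of P, OF grow, of "Suc i" R] by (auto simp: R_def)
  have "i < length (P (Suc i))"
    using growing_lists_length[of P, OF grow, of "Suc i"] by simp
  then have "P (Suc i) ! i = P R ! i"
    using w2 by (simp add: nth_append)
  also have "\<dots> = P r ! i"
    using w1 i k by (simp add: nth_append)
  finally show "map (chain_limit P) [0..<k] ! i = take k (P r) ! i"
    using i by (simp add: chain_limit_def)
qed

locale G1_II_winning =
  fixes F :: "nat set set" and \<tau> :: "nat list \<Rightarrow> nat"
  assumes winning: "G1_winning_II F \<tau>"
begin

definition outcome :: "(nat \<Rightarrow> nat) \<Rightarrow> nat set" where
  "outcome m = range (\<lambda>k. \<tau> (map m [0..<Suc k]))"

lemma outcome_in_filter: "outcome m \<in> F"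
  using winning by (simp add: outcome_def G1_winning_II_def G1_II_wins_play_def)

definition responses :: "nat list \<Rightarrow> nat set" where
  "responses p = (\<lambda>i. \<tau> (take (Suc i) p)) ` {..<length p}"

lemma finite_responses [simp]: "finite (responses p)"
  by (simp add: responses_def)

lemma responses_strict_mono:
  assumes "i < j" "j < length p"
  shows "\<tau> (take (Suc i) p) < \<tau> (take (Suc j) p)"
proof -
  have prefix: "map ((!) p) [0..<k] = take k p" if "k \<le> length p" for k
    using that by (intro nth_equalityI) auto
  have "strict_mono (\<lambda>k. \<tau> (map ((!) p) [0..<Suc k]))"
    using winning by (simp add: G1_winning_II_def G1_II_wins_play_def)
  from strict_monoD[OF this assms(1)] show ?thesis
    using assms by (simp add: prefix del: upt_Suc)
qed

lemma responses_append: "responses p \<subseteq> responses (p @ w)"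
proof
  fix x assume "x \<in> responses p"
  then obtain i where "i < length p" "x = \<tau> (take (Suc i) p)"
    by (auto simp: responses_def)
  then show "x \<in> responses (p @ w)"
    unfolding responses_def by (intro image_eqI[of _ _ i]) auto
qed

lemma new_response_index:
  assumes "x \<in> responses (p @ w)" "x \<notin> responses p"
  obtains j where "length p \<le> j" "j < length (p @ w)" "x = \<tau> (take (Suc j) (p @ w))"
proof -
  obtain j where j: "j < length (p @ w)" "x = \<tau> (take (Suc j) (p @ w))"
    using assms(1) by (auto simp: responses_def)
  have "\<not> j < length p"
  proof
    assume "j < length p"
    then have "x \<in> responses p"
      using j(2) unfolding responses_def by (intro image_eqI[of _ _ j]) auto
    with assms(2) show False ..
  qed
  show thesis
    by (rule that[of j]) (use j \<open>\<not> j < length p\<close> in auto)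
qed

lemma new_response_snoc:
  assumes "x \<in> responses (p @ [m])" "x \<notin> responses p"
  shows "x = \<tau> (p @ [m])"
  using assms by (rule new_response_index) simp

lemma new_response_above:
  assumes "p \<noteq> []" "x \<in> responses (p @ w)" "x \<notin> responses p"
  shows "\<tau> p < x"
proof -
  obtain j where j: "length p \<le> j" "j < length (p @ w)" "x = \<tau> (take (Suc j) (p @ w))"
    using assms(2,3) by (rule new_response_index)
  have len: "Suc (length p - 1) = length p"
    using assms(1) by simp
  have "length p - 1 < j"
    using assms(1) j(1) by (cases p) auto
  from responses_strict_mono[OF this j(2)] show ?thesis
    using len j(3) by simp
qed

definition unbounded_at :: "nat list \<Rightarrow> bool" where
  "unbounded_at p \<longleftrightarrow> (\<forall>K. \<exists>m. K < \<tau> (p @ [m]))"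

text \<open>Otherwise player I could answer every position extending \<open>p\<close> with a bound on II's
  replies, and II would never again play above I's move.\<close>

lemma unbounded_extension_exists: "\<exists>w. unbounded_at (p @ w)"
proof (rule ccontr)
  assume "\<nexists>w. unbounded_at (p @ w)"
  then have bounded: "\<exists>K. \<forall>m. \<tau> (p @ w @ [m]) \<le> K" for w
    by (auto simp: unbounded_at_def not_less)
  define bound where "bound q = (SOME K. \<forall>m. \<tau> (q @ [m]) \<le> K)" for q
  define P where "P j = ((\<lambda>q. q @ [bound q]) ^^ j) p" for j
  have P_0: "P 0 = p" and P_Suc: "P (Suc j) = P j @ [bound (P j)]" for j
    by (simp_all add: P_def)
  have P_len: "length (P j) = length p + j" for j
    by (induction j) (simp_all add: P_0 P_Suc)
  have P_bound: "\<tau> (P j @ [m]) \<le> bound (P j)" for j m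
  proof -
    have "\<exists>w. P j = p @ w"
    proof (induction j)
      case (Suc j)
      then obtain w where "P j = p @ w" by blast
      then show ?case
        by (intro exI[of _ "w @ [bound (P j)]"]) (simp add: P_Suc)
    qed (simp add: P_0)
    then obtain w where w: "P j = p @ w" by blast
    have "\<exists>K. \<forall>m. \<tau> (P j @ [m]) \<le> K"
      using bounded[of w] by (simp add: w)
    then have "\<forall>m. \<tau> (P j @ [m]) \<le> bound (P j)"
      unfolding bound_def by (rule someI_ex)
    then show ?thesis ..
  qed
  define m where "m = chain_limit P"
  have grow: "\<exists>w. P (Suc r) = P r @ w \<and> w \<noteq> []" for r
    by (simp add: P_Suc)
  have "\<not> m k < \<tau> (map m [0..<Suc k])" if late: "length p \<le> k" for k
  proof -
    obtain j where k: "k = length p + j"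
      using le_Suc_ex[OF late] by blast
    have "map m [0..<Suc k] = take (Suc k) (P (Suc j))"
      unfolding m_def by (rule growing_lists_limit[of P, OF grow]) (simp add: P_len k)
    also have "\<dots> = P (Suc j)"
      by (simp add: P_len k)
    finally have play: "map m [0..<Suc k] = P (Suc j)" .
    have "m k = map m [0..<Suc k] ! k"
      by (simp del: upt_Suc)
    also have "\<dots> = P (Suc j) ! k"
      by (simp only: play)
    also have "\<dots> = bound (P j)"
      by (simp add: P_Suc P_len k nth_append)
    finally show ?thesis
      by (simp add: play P_Suc not_less P_bound del: upt_Suc)
  qed
  then have "{k. m k < \<tau> (map m [0..<Suc k])} \<subseteq> {..<length p}"
    by (auto simp: not_le[symmetric])
  then have "finite {k. m k < \<tau> (map m [0..<Suc k])}"
    using finite_subset by blast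
  moreover have "infinite {k. m k < \<tau> (map m [0..<Suc k])}"
    using winning by (simp add: G1_winning_II_def G1_II_wins_play_def INFM_iff_infinite)
  ultimately show False by contradiction
qed

definition unbounded_ext :: "nat list \<Rightarrow> nat list" where
  "unbounded_ext p = p @ (SOME w. unbounded_at (p @ w))"

lemma unbounded_at_unbounded_ext: "unbounded_at (unbounded_ext p)"
  unfolding unbounded_ext_def using unbounded_extension_exists by (rule someI_ex)

definition jump :: "nat list \<Rightarrow> nat set \<Rightarrow> nat list" where
  "jump p V = p @ [SOME m. \<forall>v\<in>V. v < \<tau> (p @ [m])]"

lemma jump_above:
  assumes "unbounded_at p" "finite V"
  shows "V \<subseteq> {..<\<tau> (jump p V)}"
proof -
  obtain m where m: "Max (insert 0 V) < \<tau> (p @ [m])"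
    using assms(1) by (auto simp: unbounded_at_def)
  have "\<forall>v\<in>V. v < \<tau> (p @ [m])"
  proof
    fix v assume "v \<in> V"
    then have "v \<le> Max (insert 0 V)" using assms(2) by simp
    with m show "v < \<tau> (p @ [m])" by linarith
  qed
  then have "\<forall>v\<in>V. v < \<tau> (jump p V)"
    unfolding jump_def by (rule someI[where P = "\<lambda>m. \<forall>v\<in>V. v < \<tau> (p @ [m])"])
  then show ?thesis by auto
qed

definition advance :: "nat list \<Rightarrow> nat set \<Rightarrow> nat list" where
  "advance p V = unbounded_ext (jump p V)"

lemma advance_extends: "\<exists>w. advance p V = p @ w \<and> w \<noteq> []"
  by (simp add: advance_def unbounded_ext_def jump_def)

lemma unbounded_at_advance: "unbounded_at (advance p V)"
  by (simp add: advance_def unbounded_at_unbounded_ext)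

lemma advance_new_responses:
  assumes "unbounded_at p" "finite V" "x \<in> responses (advance p V)" "x \<notin> responses p"
  shows "V \<subseteq> {..<x}"
proof -
  let ?q = "jump p V"
  have "V \<subseteq> {..<\<tau> ?q}"
    using assms(1,2) by (rule jump_above)
  moreover have "\<tau> ?q \<le> x"
  proof (cases "x \<in> responses ?q")
    case True
    from True assms(4) have "x = \<tau> ?q"
      unfolding jump_def by (rule new_response_snoc)
    then show ?thesis by simp
  next
    case False
    with assms(3) have "\<tau> ?q < x"
      unfolding advance_def unbounded_ext_def by (intro new_response_above) (auto simp: jump_def)
    then show ?thesis by simp
  qed
  ultimately show ?thesis by auto
qed

fun next_round :: "nat list \<times> nat list \<Rightarrow> nat list \<times> nat list" where
  "next_round (p, q) =
    (let p' = advance p (responses p \<union> responses q) in (p', advance q (responses p' \<union> responses q)))"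

text \<open>Each new response in one play exceeds everything played so far in both plays.\<close>

lemma next_round_responses:
  assumes "unbounded_at p" "unbounded_at q" "next_round (p, q) = (p', q')"
  shows "responses p' \<inter> responses q' \<subseteq> responses p \<inter> responses q"
proof
  fix x assume x: "x \<in> responses p' \<inter> responses q'"
  have p': "p' = advance p (responses p \<union> responses q)"
    and q': "q' = advance q (responses p' \<union> responses q)"
    using assms(3) by (auto simp: Let_def)
  have "x \<in> responses q"
  proof (rule ccontr)
    assume "x \<notin> responses q"
    with x q' have "responses p' \<union> responses q \<subseteq> {..<x}"
      by (intro advance_new_responses[OF assms(2)]) auto
    with x show False by auto
  qed
  moreover have "x \<in> responses p"
  proof (rule ccontr)
    assume "x \<notin> responses p"
    with x p' have "responses p \<union> responses q \<subseteq> {..<x}"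
      by (intro advance_new_responses[OF assms(1)]) auto
    with \<open>x \<in> responses q\<close> show False by auto
  qed
  ultimately show "x \<in> responses p \<inter> responses q" by blast
qed

definition rounds :: "nat \<Rightarrow> nat list \<times> nat list" where
  "rounds r = (next_round ^^ r) (unbounded_ext [], unbounded_ext [])"

lemma rounds_invariant:
  "unbounded_at (fst (rounds r)) \<and> unbounded_at (snd (rounds r)) \<and>
   responses (fst (rounds r)) \<inter> responses (snd (rounds r)) \<subseteq> responses (unbounded_ext [])"
proof (induction r)
  case 0
  show ?case by (simp add: rounds_def unbounded_at_unbounded_ext)
next
  case (Suc r)
  obtain p q where pq: "rounds r = (p, q)" by fastforce
  obtain p' q' where pq': "next_round (p, q) = (p', q')" by fastforce
  have "rounds (Suc r) = (p', q')"
    using pq pq' by (simp add: rounds_def)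
  moreover have "unbounded_at p'" "unbounded_at q'"
    using pq' by (auto simp: Let_def unbounded_at_advance)
  moreover have "responses p' \<inter> responses q' \<subseteq> responses p \<inter> responses q"
    using Suc.IH pq pq' by (intro next_round_responses) auto
  ultimately show ?case
    using Suc.IH pq by auto
qed

lemma rounds_grow:
  "\<exists>w. fst (rounds (Suc r)) = fst (rounds r) @ w \<and> w \<noteq> []"
  "\<exists>w. snd (rounds (Suc r)) = snd (rounds r) @ w \<and> w \<noteq> []"
  by (cases "rounds r"; simp add: rounds_def Let_def advance_extends)+

lemma outcome_chain_limit:
  assumes grow: "\<And>r. \<exists>w. P (Suc r) = P r @ w \<and> w \<noteq> []"
  shows "outcome (chain_limit P) \<subseteq> (\<Union>r. responses (P r))"
proof
  fix y assume "y \<in> outcome (chain_limit P)"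
  then obtain k where y: "y = \<tau> (map (chain_limit P) [0..<Suc k])"
    by (auto simp: outcome_def)
  have len: "Suc k \<le> length (P (Suc k))"
    by (rule growing_lists_length[of P, OF grow])
  then have "map (chain_limit P) [0..<Suc k] = take (Suc k) (P (Suc k))"
    by (rule growing_lists_limit[of P, OF grow])
  with len have "y \<in> responses (P (Suc k))"
    unfolding responses_def y by (intro image_eqI[of _ _ k]) auto
  moreover have "responses (P (Suc k)) \<subseteq> (\<Union>r. responses (P r))"
    by (rule UN_upper[of "Suc k" UNIV "\<lambda>r. responses (P r)", OF UNIV_I])
  ultimately show "y \<in> (\<Union>r. responses (P r))"
    by (rule subsetD[rotated])
qed

lemma growing_lists_responses_mono:
  assumes grow: "\<And>r. \<exists>w. P (Suc r) = P r @ w \<and> w \<noteq> []" and "r \<le> r'"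
  shows "responses (P r) \<subseteq> responses (P r')"
proof -
  obtain w where "P r' = P r @ w"
    using growing_lists_prefix[of P, OF grow assms(2)] by blast
  then show ?thesis
    using responses_append[of "P r" w] by simp
qed

lemma two_plays_almost_disjoint: "\<exists>m m'. finite (outcome m \<inter> outcome m')"
proof -
  define PA where "PA r = fst (rounds r)" for r
  define PB where "PB r = snd (rounds r)" for r
  have growA: "\<And>r. \<exists>w. PA (Suc r) = PA r @ w \<and> w \<noteq> []"
    and growB: "\<And>r. \<exists>w. PB (Suc r) = PB r @ w \<and> w \<noteq> []"
    unfolding PA_def PB_def by (rule rounds_grow)+
  have "(\<Union>r. responses (PA r)) \<inter> (\<Union>r. responses (PB r)) \<subseteq> responses (unbounded_ext [])"
  proof
    fix x assume "x \<in> (\<Union>r. responses (PA r)) \<inter> (\<Union>r. responses (PB r))"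
    then obtain r r' where x: "x \<in> responses (PA r)" "x \<in> responses (PB r')" by blast
    define R where "R = max r r'"
    have "responses (PA r) \<subseteq> responses (PA R)" "responses (PB r') \<subseteq> responses (PB R)"
      using growing_lists_responses_mono[of PA, OF growA, of r R]
        growing_lists_responses_mono[of PB, OF growB, of r' R] by (simp_all add: R_def)
    with x have "x \<in> responses (PA R) \<inter> responses (PB R)" by blast
    moreover have "responses (PA R) \<inter> responses (PB R) \<subseteq> responses (unbounded_ext [])"
      unfolding PA_def PB_def by (rule rounds_invariant[THEN conjunct2, THEN conjunct2])
    ultimately show "x \<in> responses (unbounded_ext [])" by blast
  qed
  then have "finite ((\<Union>r. responses (PA r)) \<inter> (\<Union>r. responses (PB r)))"
    by (rule finite_subset) simp
  moreover have "outcome (chain_limit PA) \<inter> outcome (chain_limit PB)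
      \<subseteq> (\<Union>r. responses (PA r)) \<inter> (\<Union>r. responses (PB r))"
    using outcome_chain_limit[of PA, OF growA] outcome_chain_limit[of PB, OF growB]
    by (rule Int_mono)
  ultimately have "finite (outcome (chain_limit PA) \<inter> outcome (chain_limit PB))"
    by (rule finite_subset[rotated])
  then show ?thesis
    by blast
qed

end

lemma not_II_wins_G1:
  assumes "proper_filter F"
  shows "\<not> II_wins_G1 F"
proof
  assume "II_wins_G1 F"
  then obtain \<tau> where "G1_winning_II F \<tau>"
    by (auto simp: II_wins_G1_def)
  then interpret G1_II_winning F \<tau>
    by unfold_locales
  obtain m m' where "finite (outcome m \<inter> outcome m')"
    using two_plays_almost_disjoint by blast
  moreover have "outcome m \<inter> outcome m' \<in> F"
    using assms filter_Int outcome_in_filter by (auto simp: proper_filter_def)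
  ultimately show False
    using assms by (auto simp: proper_filter_def)
qed

theorem theorem2p11:
  fixes F :: "nat set set"
  assumes "proper_filter F"
  shows "(I_wins_G1 F \<longleftrightarrow> I_wins_G Fr F)
       \<and> (II_wins_G1 F \<longleftrightarrow> II_wins_G Fr F)
       \<and> (I_wins_G1 F \<longleftrightarrow> meager_family F)
       \<and> (I_wins_G Fr F \<longleftrightarrow> meager_family F)
       \<and> \<not> II_wins_G1 F
       \<and> \<not> II_wins_G Fr F"
proof -
  have "is_filter F"
    using assms by (simp add: proper_filter_def)
  then have "I_wins_G Fr F \<longleftrightarrow> meager_family F" "I_wins_G1 F \<longleftrightarrow> meager_family F"
    by (simp_all add: meager_family_iff_meets_almost_all_blocks I_wins_G_iff_meets_almost_all_blocks
        I_wins_G1_iff_meets_almost_all_blocks)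
  moreover have "\<not> II_wins_G1 F" "\<not> II_wins_G Fr F"
    using assms by (simp_all add: not_II_wins_G1 not_II_wins_G)
  ultimately show ?thesis by blast
qed

end
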